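(* Let $\mathcal G$ be a finite connected groupoid and $\alpha=(S_g,\alpha_g)_{g\in\mathcal G}$ a unital group-type partial action of $\mathcal G$ on a commutative ring $S=\bigoplus_{y\in\mathcal G_0}S_y$, with $S_g=S1_g$ and $1_g\neq0$ for all $g$. Let $\mathcal H\in\mathrm{wSub}_\alpha(\mathcal G)$, with connected components $\mathcal H_1,\dots,\mathcal H_r$ having object sets $Y_1,\dots,Y_r$, choose $y_j\in Y_j$, and let $T=S^{\alpha_{\mathcal H}}$ and $T_{y_j}=S_{y_j}^{\alpha_{\mathcal H_j(y_j)}}$. The following are equivalent: (i) $T$ is $\alpha$-strong; (ii) for any $g,h\in\mathcal G$ with $t(g)=t(h)$ and $g^{-1}h\notin\mathcal G_T$, and any non-zero idempotent $e\in S_g\cup S_h$, there exists $t\in T$ with $\alpha_g(t1_{g^{-1}})e\neq\alpha_h(t1_{h^{-1}})e$; (iii) $T_{y_j}$ is $\alpha_{\mathcal G(y_j,y_j)}$-strong for all $1\le j\le r$.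
   Context: A groupoid is a small category with all morphisms invertible; $\mathcal G_0$ is its object set (identified with identity morphisms), $s(g),t(g)$ source and target, $\mathcal G(x,y)=\{g:s(g)=x,t(g)=y\}$, $\mathcal G(x)=\mathcal G(x,x)$; $gh$ defined iff $s(g)=t(h)$; connected means all $\mathcal G(x,y)\neq\emptyset$; connected components are full subgroupoids on classes of $x\sim y\iff\mathcal G(x,y)\ne\emptyset$; wide means containing all objects. A partial action $\alpha=(S_g,\alpha_g)_{g\in\mathcal G}$ on a ring $S$: for each $g$, $S_{t(g)}$ is an ideal of $S$, $S_g$ an ideal of $S_{t(g)}$, $\alpha_g:S_{g^{-1}}\to S_g$ a ring isomorphism; $\alpha_x=\mathrm{id}_{S_x}$; for composable $(g,h)$, $\alpha_h^{-1}(S_{g^{-1}}\cap S_h)\subseteq S_{(gh)^{-1}}$ and $\alpha_g\alpha_h(a)=\alpha_{gh}(a)$ there. Unital: $S_g=S1_g$, $1_g$ central idempotent. A partial action of a connected groupoid $\mathcal K$ on $A=\bigoplus_{y\in\mathcal K_0}A_y$ is group-type if there are $x\in\mathcal K_0$ and $\tau_y\in\mathcal K(x,y)$ ($\tau_x=x$) with $A_{\tau_y^{-1}}=A_x$, $A_{\tau_y}=A_y$ for all $y$; for non-connected $\mathcal K$ it is group-type if each restriction to a connected component is group-type. For a subgroupoid $\mathcal H$, $\alpha_{\mathcal H}=(S_h,\alpha_h)_{h\in\mathcal H}$ acts on $\bigoplus_{z\in\mathcal H_0}S_z$; $\mathrm{wSub}_\alpha(\mathcal G)$ is the set of wide subgroupoids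 $\mathcal H$ with $\alpha_{\mathcal H}$ group-type. For a subgroupoid $\mathcal K$ and subring $A\subseteq S$, $A^{\alpha_{\mathcal K}}=\{a\in A:\alpha_k(a1_{k^{-1}})=a1_k\ \forall k\in\mathcal K\}$. For a subring $T\subseteq S$, $\mathcal G_T=\{g\in\mathcal G:\alpha_g(t1_{g^{-1}})=t1_g\ \forall t\in T\}$; for $y\in\mathcal G_0$ and subring $B\subseteq S_y$, $\mathcal G(y)_B=\{l\in\mathcal G(y):\alpha_l(b1_{l^{-1}})=b1_l\ \forall b\in B\}$. For a subring $T\subseteq S$ and $y\in\mathcal G_0$ put $T_y=T1_y$ (for a subring $B\subseteq S_y$, $B1_y=B$). $T_y$ is $\alpha_{\mathcal G(y,z)}$-strong if for any $g,h\in\mathcal G(y,z)$ with $g^{-1}h\notin\mathcal G(y)_{T_y}$ and any non-zero idempotent $e\in S_g\cup S_h$ there is $t_y\in T_y$ with $\alpha_g(t_y1_{g^{-1}})e\neq\alpha_h(t_y1_{h^{-1}})e$. $T$ is $\alpha$-strong if $T_y$ is $\alpha_{\mathcal G(y,z)}$-strong for all $y,z\in\mathcal G_0$. *)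

theory Defs
  imports Main
begin

text \<open>Objects are identified with identity morphisms. The composite
\<open>cmp g h\<close> (i.e. gh) is defined iff \<open>src g = tgt h\<close>.\<close>

record 'g groupoid =
  Mor :: "'g set"
  src :: "'g \<Rightarrow> 'g"
  tgt :: "'g \<Rightarrow> 'g"
  cmp :: "'g \<Rightarrow> 'g \<Rightarrow> 'g"
  ginv :: "'g \<Rightarrow> 'g"

definition is_groupoid :: "'g groupoid \<Rightarrow> bool" where
  "is_groupoid G \<longleftrightarrow>
     (\<forall>g\<in>Mor G. src G g \<in> Mor G \<and> tgt G g \<in> Mor G
        \<and> src G (src G g) = src G g \<and> tgt G (src G g) = src G g
        \<and> src G (tgt G g) = tgt G g \<and> tgt G (tgt G g) = tgt G g
        \<and> cmp G g (src G g) = g \<and> cmp G (tgt G g) g = g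
        \<and> ginv G g \<in> Mor G \<and> src G (ginv G g) = tgt G g \<and> tgt G (ginv G g) = src G g
        \<and> cmp G g (ginv G g) = tgt G g \<and> cmp G (ginv G g) g = src G g)
   \<and> (\<forall>g\<in>Mor G. \<forall>h\<in>Mor G. src G g = tgt G h \<longrightarrow>
        cmp G g h \<in> Mor G \<and> src G (cmp G g h) = src G h \<and> tgt G (cmp G g h) = tgt G g)
   \<and> (\<forall>g\<in>Mor G. \<forall>h\<in>Mor G. \<forall>k\<in>Mor G. src G g = tgt G h \<longrightarrow> src G h = tgt G k \<longrightarrow>
        cmp G (cmp G g h) k = cmp G g (cmp G h k))"

definition objs :: "'g groupoid \<Rightarrow> 'g set \<Rightarrow> 'g set" where
  "objs G K = src G ` K"

definition hom :: "'g groupoid \<Rightarrow> 'g set \<Rightarrow> 'g \<Rightarrow> 'g \<Rightarrow> 'g set" where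
  "hom G K x y = {g\<in>K. src G g = x \<and> tgt G g = y}"

definition connected_groupoid :: "'g groupoid \<Rightarrow> bool" where
  "connected_groupoid G \<longleftrightarrow> (\<forall>x\<in>objs G (Mor G). \<forall>y\<in>objs G (Mor G). hom G (Mor G) x y \<noteq> {})"

definition subgroupoid :: "'g groupoid \<Rightarrow> 'g set \<Rightarrow> bool" where
  "subgroupoid G H \<longleftrightarrow> H \<subseteq> Mor G
     \<and> (\<forall>h\<in>H. src G h \<in> H \<and> tgt G h \<in> H \<and> ginv G h \<in> H)
     \<and> (\<forall>h\<in>H. \<forall>k\<in>H. src G h = tgt G k \<longrightarrow> cmp G h k \<in> H)"

definition wide :: "'g groupoid \<Rightarrow> 'g set \<Rightarrow> bool" where
  "wide G H \<longleftrightarrow> objs G (Mor G) \<subseteq> H"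

definition component_objs :: "'g groupoid \<Rightarrow> 'g set \<Rightarrow> 'g \<Rightarrow> 'g set" where
  "component_objs G K x = {y\<in>objs G K. hom G K x y \<noteq> {}}"

text \<open>The ideal \<open>S e = {a e}\<close> generated by an element; for the unital partial
action \<open>S_g = S 1_g\<close>, with \<open>one g = 1_g\<close>.\<close>
definition Sid :: "'r::comm_ring_1 \<Rightarrow> 'r set" where
  "Sid e = range (\<lambda>a. a * e)"

definition internal_direct_sum :: "'g groupoid \<Rightarrow> ('g \<Rightarrow> 'r::comm_ring_1) \<Rightarrow> bool" where
  "internal_direct_sum G one \<longleftrightarrow>
     (\<forall>a. \<exists>c. (\<forall>y\<in>objs G (Mor G). c y \<in> Sid (one y)) \<and> a = (\<Sum>y\<in>objs G (Mor G). c y))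
   \<and> (\<forall>c. (\<forall>y\<in>objs G (Mor G). c y \<in> Sid (one y)) \<and> (\<Sum>y\<in>objs G (Mor G). c y) = 0
          \<longrightarrow> (\<forall>y\<in>objs G (Mor G). c y = 0))"

text \<open>Unital partial action \<open>(S_g, \<alpha>_g)\<close> of \<open>G\<close> on the commutative ring (the whole type)
\<open>'r\<close>, with \<open>S_g = S 1_g\<close>, \<open>1_g\<close> a (central) idempotent.\<close>
definition unital_partial_action ::
  "'g groupoid \<Rightarrow> ('g \<Rightarrow> 'r::comm_ring_1) \<Rightarrow> ('g \<Rightarrow> 'r \<Rightarrow> 'r) \<Rightarrow> bool" where
  "unital_partial_action G one \<alpha> \<longleftrightarrow>
     (\<forall>g\<in>Mor G. one g * one g = one g \<and> Sid (one g) \<subseteq> Sid (one (tgt G g)))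
   \<and> (\<forall>g\<in>Mor G. bij_betw (\<alpha> g) (Sid (one (ginv G g))) (Sid (one g))
        \<and> (\<forall>a\<in>Sid (one (ginv G g)). \<forall>b\<in>Sid (one (ginv G g)).
              \<alpha> g (a + b) = \<alpha> g a + \<alpha> g b \<and> \<alpha> g (a * b) = \<alpha> g a * \<alpha> g b))
   \<and> (\<forall>x\<in>objs G (Mor G). \<forall>a\<in>Sid (one x). \<alpha> x a = a)
   \<and> (\<forall>g\<in>Mor G. \<forall>h\<in>Mor G. src G g = tgt G h \<longrightarrow>
        (let D = {a\<in>Sid (one (ginv G h)). \<alpha> h a \<in> Sid (one (ginv G g)) \<inter> Sid (one h)} in
          D \<subseteq> Sid (one (ginv G (cmp G g h)))
          \<and> (\<forall>a\<in>D. \<alpha> g (\<alpha> h a) = \<alpha> (cmp G g h) a)))"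

definition group_type :: "'g groupoid \<Rightarrow> ('g \<Rightarrow> 'r::comm_ring_1) \<Rightarrow> 'g set \<Rightarrow> bool" where
  "group_type G one K \<longleftrightarrow>
     (\<forall>z\<in>objs G K. let C = component_objs G K z in
        \<exists>x\<in>C. \<exists>\<tau>. \<tau> x = x \<and> (\<forall>y\<in>C. \<tau> y \<in> hom G K x y
             \<and> Sid (one (ginv G (\<tau> y))) = Sid (one x) \<and> Sid (one (\<tau> y)) = Sid (one y)))"

definition wSub :: "'g groupoid \<Rightarrow> ('g \<Rightarrow> 'r::comm_ring_1) \<Rightarrow> 'g set set" where
  "wSub G one = {H. subgroupoid G H \<and> wide G H \<and> group_type G one H}"

definition fixed :: "'g groupoid \<Rightarrow> ('g \<Rightarrow> 'r::comm_ring_1) \<Rightarrow> ('g \<Rightarrow> 'r \<Rightarrow> 'r)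
     \<Rightarrow> 'g set \<Rightarrow> 'r set \<Rightarrow> 'r set" where
  "fixed G one \<alpha> K A = {a\<in>A. \<forall>k\<in>K. \<alpha> k (a * one (ginv G k)) = a * one k}"

text \<open>\<open>\<G>_T\<close>, and \<open>\<G>(y)_B\<close> (the latter is \<open>stab G one \<alpha> (hom G (Mor G) y y) B\<close>).\<close>
definition stab :: "'g groupoid \<Rightarrow> ('g \<Rightarrow> 'r::comm_ring_1) \<Rightarrow> ('g \<Rightarrow> 'r \<Rightarrow> 'r)
     \<Rightarrow> 'g set \<Rightarrow> 'r set \<Rightarrow> 'g set" where
  "stab G one \<alpha> K T = {g\<in>K. \<forall>t\<in>T. \<alpha> g (t * one (ginv G g)) = t * one g}"

definition restrict_obj :: "('g \<Rightarrow> 'r::comm_ring_1) \<Rightarrow> 'r set \<Rightarrow> 'g \<Rightarrow> 'r set" where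
  "restrict_obj one T y = (\<lambda>t. t * one y) ` T"

definition nz_idem :: "'r::comm_ring_1 \<Rightarrow> bool" where
  "nz_idem e \<longleftrightarrow> e * e = e \<and> e \<noteq> 0"

definition strong_at :: "'g groupoid \<Rightarrow> ('g \<Rightarrow> 'r::comm_ring_1) \<Rightarrow> ('g \<Rightarrow> 'r \<Rightarrow> 'r)
     \<Rightarrow> 'r set \<Rightarrow> 'g \<Rightarrow> 'g \<Rightarrow> bool" where
  "strong_at G one \<alpha> B y z \<longleftrightarrow>
     (\<forall>g\<in>hom G (Mor G) y z. \<forall>h\<in>hom G (Mor G) y z.
        cmp G (ginv G g) h \<notin> stab G one \<alpha> (hom G (Mor G) y y) B \<longrightarrow>
        (\<forall>e. nz_idem e \<and> e \<in> Sid (one g) \<union> Sid (one h) \<longrightarrow>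
           (\<exists>b\<in>B. \<alpha> g (b * one (ginv G g)) * e \<noteq> \<alpha> h (b * one (ginv G h)) * e)))"

definition alpha_strong :: "'g groupoid \<Rightarrow> ('g \<Rightarrow> 'r::comm_ring_1) \<Rightarrow> ('g \<Rightarrow> 'r \<Rightarrow> 'r)
     \<Rightarrow> 'r set \<Rightarrow> bool" where
  "alpha_strong G one \<alpha> T \<longleftrightarrow>
     (\<forall>y\<in>objs G (Mor G). \<forall>z\<in>objs G (Mor G). strong_at G one \<alpha> (restrict_obj one T y) y z)"

end

(*
  Write \<beta>_g(t) = \<alpha>_g(t 1_{g^-1}); all conditions of the theorem are statements about the
  ring homomorphisms \<beta>_g : S \<rightarrow> S_g. Call g global if S_g = S_{t(g)} and S_{g^-1} = S_{s(g)}.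
  By the group-type hypotheses, two objects joined by a morphism of H (of G) are joined by a
  global morphism of H (of G), and composition with a global morphism is total:
  \<beta>_{lm} = \<beta>_l \<beta>_m as soon as l or m is global.

  For a global morphism k of H, \<beta>_{hk} and \<beta>_h agree on T and 1_{hk} = 1_h, and lk lies in
  G_T iff l does. Hence separating g from h by elements of T is unaffected by composing with
  global morphisms of H on the right, or (moving the idempotent along \<beta>_m) with global
  morphisms m of G on the left. This reduces (ii) to pairs with a common source, that is to
  (i), once pairs whose sources lie in different components of H are separated by the sum of
  the 1_v over a component, which lies in T; and it reduces (i) to the loops at the chosen
  objects y_j. Finally T_{y_j} = S_{y_j}^{\<alpha>_{H_j(y_j)}}: an element fixed by the isotropy of H at
  y_j extends to an element of T by transporting it along global morphisms y_j \<rightarrow> v of H to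
  all objects v of the component.
*)

theory Submission
  imports Defs
begin

lemma mem_hom [simp]: "g \<in> hom G K x y \<longleftrightarrow> g \<in> K \<and> src G g = x \<and> tgt G g = y"
  unfolding hom_def by simp

lemma hom_eq_empty_iff [simp]: "hom G K x y = {} \<longleftrightarrow> (\<forall>g\<in>K. src G g = x \<longrightarrow> tgt G g \<noteq> y)"
  unfolding hom_def by blast

lemma subgroupoidD:
  assumes "subgroupoid G K"
  shows "K \<subseteq> Mor G"
    and "h \<in> K \<Longrightarrow> src G h \<in> K" "h \<in> K \<Longrightarrow> tgt G h \<in> K" "h \<in> K \<Longrightarrow> ginv G h \<in> K"
    and "h \<in> K \<Longrightarrow> k \<in> K \<Longrightarrow> src G h = tgt G k \<Longrightarrow> cmp G h k \<in> K"
  using assms unfolding subgroupoid_def by blast+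

locale groupoid =
  fixes G :: "'g groupoid"
  assumes is_groupoid: "is_groupoid G"
begin

abbreviation Ob :: "'g set" where "Ob \<equiv> objs G (Mor G)"

lemma groupoid_simps [simp]:
  assumes "g \<in> Mor G"
  shows "src G g \<in> Mor G" "tgt G g \<in> Mor G" "ginv G g \<in> Mor G"
    "src G (src G g) = src G g" "tgt G (src G g) = src G g"
    "src G (tgt G g) = tgt G g" "tgt G (tgt G g) = tgt G g"
    "src G (ginv G g) = tgt G g" "tgt G (ginv G g) = src G g"
    "cmp G g (ginv G g) = tgt G g" "cmp G (ginv G g) g = src G g"
  using is_groupoid assms unfolding is_groupoid_def by blast+

lemma cmp_unit [simp]:
  assumes "g \<in> Mor G"
  shows "src G g = x \<Longrightarrow> cmp G g x = g" and "tgt G g = x \<Longrightarrow> cmp G x g = g"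
  using is_groupoid assms unfolding is_groupoid_def by blast+

lemma cmp_simps [simp]:
  assumes "g \<in> Mor G" "h \<in> Mor G" "src G g = tgt G h"
  shows "cmp G g h \<in> Mor G" "src G (cmp G g h) = src G h" "tgt G (cmp G g h) = tgt G g"
  using is_groupoid assms unfolding is_groupoid_def by blast+

lemma cmp_assoc [simp]:
  assumes "g \<in> Mor G" "h \<in> Mor G" "k \<in> Mor G" "src G g = tgt G h" "src G h = tgt G k"
  shows "cmp G (cmp G g h) k = cmp G g (cmp G h k)"
  using is_groupoid assms unfolding is_groupoid_def by blast

lemma cmp_ginv_cancel [simp]:
  assumes "g \<in> Mor G" "h \<in> Mor G"
  shows "src G g = tgt G h \<Longrightarrow> cmp G (ginv G g) (cmp G g h) = h"
    and "tgt G g = tgt G h \<Longrightarrow> cmp G g (cmp G (ginv G g) h) = h"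
  using cmp_assoc[of "ginv G g" g h] cmp_assoc[of g "ginv G g" h] assms by simp_all

lemma ginv_ginv [simp]:
  assumes "g \<in> Mor G"
  shows "ginv G (ginv G g) = g"
proof -
  have "ginv G (ginv G g) = cmp G (ginv G (ginv G g)) (cmp G (ginv G g) g)"
    using assms by simp
  also have "\<dots> = g"
    using cmp_ginv_cancel(1)[of "ginv G g" g] assms by simp
  finally show ?thesis .
qed

lemma ginv_unique:
  assumes "g \<in> Mor G" "f \<in> Mor G" "src G f = tgt G g" "cmp G f g = src G g"
  shows "ginv G g = f"
proof -
  have "ginv G g = cmp G (cmp G f g) (ginv G g)"
    using assms by simp
  also have "\<dots> = cmp G f (cmp G g (ginv G g))"
    by (rule cmp_assoc) (use assms in simp_all)
  also have "\<dots> = f"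
    using assms by simp
  finally show ?thesis .
qed

lemma ginv_cmp:
  assumes "g \<in> Mor G" "h \<in> Mor G" "src G g = tgt G h"
  shows "ginv G (cmp G g h) = cmp G (ginv G h) (ginv G g)"
  by (rule ginv_unique) (use assms in simp_all)

lemma Ob_iff: "x \<in> Ob \<longleftrightarrow> x \<in> Mor G \<and> src G x = x"
  unfolding objs_def image_iff by (metis groupoid_simps(1,4))

lemma src_in_Ob [simp]: "g \<in> Mor G \<Longrightarrow> src G g \<in> Ob"
  and tgt_in_Ob [simp]: "g \<in> Mor G \<Longrightarrow> tgt G g \<in> Ob"
  by (simp_all add: Ob_iff)

lemma obj_simps [simp]:
  assumes "x \<in> Ob"
  shows "x \<in> Mor G" "src G x = x" "tgt G x = x" "ginv G x = x"
proof -
  show x: "x \<in> Mor G" "src G x = x"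
    using assms unfolding Ob_iff by auto
  then show tx: "tgt G x = x"
    using groupoid_simps(5)[of x] by simp
  have "ginv G x = cmp G (ginv G x) x"
    using x tx by simp
  also have "\<dots> = x"
    using x by simp
  finally show "ginv G x = x" .
qed

lemma cmp_ginv_cmp_cancel:
  assumes "m \<in> Mor G" "g \<in> Mor G" "h \<in> Mor G" "src G m = tgt G g" "tgt G g = tgt G h"
  shows "cmp G (ginv G (cmp G m g)) (cmp G m h) = cmp G (ginv G g) h"
  using assms by (simp add: ginv_cmp)

lemma cmp_ginv_cmp_conj:
  assumes "g \<in> Mor G" "h \<in> Mor G" "k \<in> Mor G"
    and "src G g = tgt G k" "src G h = tgt G k" "tgt G g = tgt G h"
  shows "cmp G (ginv G (cmp G g k)) (cmp G h k) = cmp G (cmp G (ginv G k) (cmp G (ginv G g) h)) k"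
  using assms by (simp add: ginv_cmp)

lemma subgroupoid_Mor: "subgroupoid G (Mor G)"
  unfolding subgroupoid_def by simp

end

lemma Sid_idem_iff:
  fixes e :: "'r::comm_ring_1"
  assumes "e * e = e"
  shows "a \<in> Sid e \<longleftrightarrow> a * e = a"
proof
  assume "a \<in> Sid e"
  then obtain b where "a = b * e"
    unfolding Sid_def by auto
  then show "a * e = a"
    using assms by (simp add: mult.assoc)
next
  assume "a * e = a"
  then show "a \<in> Sid e"
    unfolding Sid_def by (metis rangeI)
qed

lemma Sid_idem_inj:
  fixes e f :: "'r::comm_ring_1"
  assumes "e * e = e" "f * f = f" "Sid e = Sid f"
  shows "e = f"
proof -
  have "e * f = e" "f * e = f"
    using Sid_idem_iff[of e e] Sid_idem_iff[of f f] Sid_idem_iff[of f e] Sid_idem_iff[of e f] assms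
    by auto
  then show ?thesis
    by (simp add: mult.commute)
qed

locale partial_action = groupoid G for G :: "'g groupoid" +
  fixes one :: "'g \<Rightarrow> 'r::comm_ring_1" and \<alpha> :: "'g \<Rightarrow> 'r \<Rightarrow> 'r"
  assumes unital: "unital_partial_action G one \<alpha>"
begin

lemma one_idem [simp]: "g \<in> Mor G \<Longrightarrow> one g * one g = one g"
  using unital unfolding unital_partial_action_def by blast

lemma mult_one_idem [simp]: "g \<in> Mor G \<Longrightarrow> a * one g * one g = a * one g"
  by (simp add: mult.assoc)

lemma one_idem_left [simp]: "g \<in> Mor G \<Longrightarrow> one g * (one g * a) = one g * a"
  by (simp add: mult.assoc[symmetric])

lemma mem_Sid_one_iff [simp]: "g \<in> Mor G \<Longrightarrow> a \<in> Sid (one g) \<longleftrightarrow> a * one g = a"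
  by (simp add: Sid_idem_iff)

lemma one_mult_one_tgt [simp]:
  assumes "g \<in> Mor G"
  shows "one g * one (tgt G g) = one g"
proof -
  have "Sid (one g) \<subseteq> Sid (one (tgt G g))"
    using unital assms unfolding unital_partial_action_def by blast
  moreover have "one g \<in> Sid (one g)"
    using assms by simp
  ultimately have "one g \<in> Sid (one (tgt G g))"
    by blast
  then show ?thesis
    using assms by simp
qed

lemma one_tgt_mult_one [simp]: "g \<in> Mor G \<Longrightarrow> tgt G g = x \<Longrightarrow> one x * one g = one g"
  using one_mult_one_tgt[of g] by (simp add: mult.commute)

lemma one_ginv_mult_one_src [simp]: "g \<in> Mor G \<Longrightarrow> one (ginv G g) * one (src G g) = one (ginv G g)"
  using one_mult_one_tgt[of "ginv G g"] by simp

lemma mult_one_mult_one_tgt [simp]: "g \<in> Mor G \<Longrightarrow> a * one g * one (tgt G g) = a * one g"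
  by (simp add: mult.assoc)

lemma alpha_bij: "g \<in> Mor G \<Longrightarrow> bij_betw (\<alpha> g) (Sid (one (ginv G g))) (Sid (one g))"
  using unital unfolding unital_partial_action_def by blast

lemma alpha_add_mult:
  assumes "g \<in> Mor G" "a * one (ginv G g) = a" "b * one (ginv G g) = b"
  shows "\<alpha> g (a + b) = \<alpha> g a + \<alpha> g b" "\<alpha> g (a * b) = \<alpha> g a * \<alpha> g b"
  using unital assms unfolding unital_partial_action_def by simp_all

lemma alpha_obj: "x \<in> Ob \<Longrightarrow> a * one x = a \<Longrightarrow> \<alpha> x a = a"
  using unital unfolding unital_partial_action_def by simp

lemma alpha_cmp:
  assumes "g \<in> Mor G" "h \<in> Mor G" "src G g = tgt G h"
    and "a * one (ginv G h) = a" "\<alpha> h a * one (ginv G g) = \<alpha> h a"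
  shows "a * one (ginv G (cmp G g h)) = a" "\<alpha> g (\<alpha> h a) = \<alpha> (cmp G g h) a"
proof -
  have "\<alpha> h a * one h = \<alpha> h a"
    using alpha_bij[OF assms(2)] assms(2,4) bij_betwE by fastforce
  then have "a \<in> {a \<in> Sid (one (ginv G h)). \<alpha> h a \<in> Sid (one (ginv G g)) \<inter> Sid (one h)}"
    using assms by simp
  moreover have "let D = {a \<in> Sid (one (ginv G h)). \<alpha> h a \<in> Sid (one (ginv G g)) \<inter> Sid (one h)}
      in D \<subseteq> Sid (one (ginv G (cmp G g h))) \<and> (\<forall>a\<in>D. \<alpha> g (\<alpha> h a) = \<alpha> (cmp G g h) a)"
    using unital assms(1-3) unfolding unital_partial_action_def by blast
  ultimately have "a \<in> Sid (one (ginv G (cmp G g h)))" "\<alpha> g (\<alpha> h a) = \<alpha> (cmp G g h) a"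
    unfolding Let_def by blast+
  then show "a * one (ginv G (cmp G g h)) = a" "\<alpha> g (\<alpha> h a) = \<alpha> (cmp G g h) a"
    using assms by simp_all
qed

definition \<beta> :: "'g \<Rightarrow> 'r \<Rightarrow> 'r" where
  "\<beta> g t = \<alpha> g (t * one (ginv G g))"

lemma alpha_eq_beta: "g \<in> Mor G \<Longrightarrow> a * one (ginv G g) = a \<Longrightarrow> \<alpha> g a = \<beta> g a"
  unfolding \<beta>_def by simp

lemma beta_in [simp]:
  assumes "g \<in> Mor G"
  shows "\<beta> g t * one g = \<beta> g t"
proof -
  have "t * one (ginv G g) \<in> Sid (one (ginv G g))"
    using assms by simp
  then have "\<beta> g t \<in> Sid (one g)"
    using bij_betwE[OF alpha_bij[OF assms]] unfolding \<beta>_def by blast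
  then show ?thesis
    using assms by simp
qed

lemma beta_in_tgt [simp]: "g \<in> Mor G \<Longrightarrow> \<beta> g t * one (tgt G g) = \<beta> g t"
  by (metis beta_in mult_one_mult_one_tgt)

lemma beta_mult: "g \<in> Mor G \<Longrightarrow> \<beta> g (a * b) = \<beta> g a * \<beta> g b"
  using alpha_add_mult(2)[of g "a * one (ginv G g)" "b * one (ginv G g)"]
  unfolding \<beta>_def by (simp add: ac_simps)

lemma beta_add: "g \<in> Mor G \<Longrightarrow> \<beta> g (a + b) = \<beta> g a + \<beta> g b"
  using alpha_add_mult(1)[of g "a * one (ginv G g)" "b * one (ginv G g)"]
  unfolding \<beta>_def by (simp add: algebra_simps)

lemma beta_zero [simp]: "g \<in> Mor G \<Longrightarrow> \<beta> g 0 = 0"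
  using beta_add[of g 0 0] by simp

lemma beta_restrict [simp]:
  assumes "g \<in> Mor G"
  shows "\<beta> g (t * one (ginv G g)) = \<beta> g t" "src G g = x \<Longrightarrow> \<beta> g (t * one x) = \<beta> g t"
proof -
  show "\<beta> g (t * one (ginv G g)) = \<beta> g t"
    using assms unfolding \<beta>_def by simp
  have "t * one (src G g) * one (ginv G g) = t * one (ginv G g)"
    using assms one_ginv_mult_one_src[of g] by (metis mult.assoc mult.commute)
  then show "\<beta> g (t * one x) = \<beta> g t" if "src G g = x"
    using assms that unfolding \<beta>_def by simp
qed

lemma beta_one [simp]:
  assumes "g \<in> Mor G"
  shows "\<beta> g 1 = one g"
proof -
  have "one g \<in> \<alpha> g ` Sid (one (ginv G g))"
    using bij_betw_imp_surj_on[OF alpha_bij[OF assms]] assms by simp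
  then obtain b where b: "b * one (ginv G g) = b" "\<alpha> g b = one g"
    using assms by auto
  have "\<beta> g 1 = \<beta> g 1 * \<alpha> g b"
    using assms b by simp
  also have "\<dots> = \<alpha> g (one (ginv G g) * b)"
    using alpha_add_mult(2)[of g "one (ginv G g)" b] assms b unfolding \<beta>_def by simp
  also have "\<dots> = one g"
    using b by (simp add: mult.commute)
  finally show ?thesis .
qed

lemma beta_one_src [simp]: "g \<in> Mor G \<Longrightarrow> src G g = x \<Longrightarrow> \<beta> g (one x) = one g"
  using beta_restrict(2)[of g x 1] by simp

lemma beta_ginv_beta [simp]:
  assumes "g \<in> Mor G"
  shows "\<beta> (ginv G g) (\<beta> g t) = t * one (ginv G g)"
proof -
  let ?a = "t * one (ginv G g)"
  have "\<alpha> (ginv G g) (\<alpha> g ?a) = \<alpha> (src G g) ?a"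
    using alpha_cmp(2)[of "ginv G g" g ?a] assms beta_in[of g t] unfolding \<beta>_def by simp
  also have "\<dots> = ?a"
    using alpha_obj[of "src G g" ?a] assms by (simp add: mult.assoc)
  finally show ?thesis
    using assms beta_in[of g t] unfolding \<beta>_def by simp
qed

lemma beta_beta_ginv [simp]: "g \<in> Mor G \<Longrightarrow> \<beta> g (\<beta> (ginv G g) t) = t * one g"
  using beta_ginv_beta[of "ginv G g" t] by simp

lemma one_ginv_cmp:
  assumes "l \<in> Mor G" "m \<in> Mor G" "src G l = tgt G m"
  shows "\<beta> (ginv G m) (one (ginv G l)) = one (ginv G m) * one (ginv G (cmp G l m))"
    (is "?u = ?e")
proof -
  have u_dom: "?u * one (ginv G m) = ?u"
    using assms by simp
  have "\<alpha> m ?u = one (ginv G l) * one m"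
    using alpha_eq_beta[of m ?u] u_dom assms by simp
  then have "\<alpha> m ?u * one (ginv G l) = \<alpha> m ?u"
    using assms by (simp add: ac_simps)
  then have "?u * one (ginv G (cmp G l m)) = ?u"
    using alpha_cmp(1)[of l m ?u] u_dom assms by simp
  then have u_le: "?u = ?u * ?e"
    using u_dom by (metis mult.assoc)
  let ?a = "\<beta> m (one (ginv G (cmp G l m)))"
  have ginv_a: "\<beta> (ginv G m) ?a = ?e"
    using assms by (simp add: mult.commute)
  have "?a * one (ginv G (cmp G (cmp G l m) (ginv G m))) = ?a"
    using alpha_cmp(1)[of "cmp G l m" "ginv G m" ?a] alpha_eq_beta[of "ginv G m" ?a] ginv_a assms
    by (simp add: mult.assoc)
  then have "?a * one (ginv G l) = ?a"
    using assms by simp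
  then have "?e = \<beta> (ginv G m) (?a * one (ginv G l))"
    using ginv_a by simp
  also have "\<dots> = ?e * ?u"
    using beta_mult ginv_a assms by simp
  finally show ?thesis
    using u_le by (simp add: mult.commute)
qed

lemma beta_cmp:
  assumes "l \<in> Mor G" "m \<in> Mor G" "src G l = tgt G m"
  shows "\<beta> l (\<beta> m t) = \<beta> (cmp G l m) (t * one (ginv G m))"
proof -
  let ?a = "t * (one (ginv G m) * one (ginv G (cmp G l m)))"
  have a_dom: "?a * one (ginv G m) = ?a"
    using assms by (simp add: ac_simps)
  have "\<alpha> m ?a = \<beta> m t * \<beta> m (\<beta> (ginv G m) (one (ginv G l)))"
    using alpha_eq_beta[OF _ a_dom] beta_mult one_ginv_cmp assms by simp
  also have "\<dots> = \<beta> m t * one (ginv G l)"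
    using assms beta_in[of m t] by (metis beta_beta_ginv mult.assoc mult.commute)
  finally have a_img: "\<alpha> m ?a = \<beta> m t * one (ginv G l)" .
  have "\<beta> l (\<beta> m t) = \<alpha> l (\<alpha> m ?a)"
    using a_img unfolding \<beta>_def by simp
  also have "\<dots> = \<alpha> (cmp G l m) ?a"
    using alpha_cmp(2)[of l m ?a] a_dom a_img assms by (simp add: mult.assoc)
  also have "\<dots> = \<beta> (cmp G l m) (t * one (ginv G m))"
    unfolding \<beta>_def by (simp add: mult.assoc)
  finally show ?thesis .
qed

lemma mem_stab_iff: "g \<in> stab G one \<alpha> K B \<longleftrightarrow> g \<in> K \<and> (\<forall>t\<in>B. \<beta> g t = t * one g)"
  unfolding stab_def \<beta>_def by simp

lemma mem_fixed_iff: "a \<in> fixed G one \<alpha> K A \<longleftrightarrow> a \<in> A \<and> (\<forall>k\<in>K. \<beta> k a = a * one k)"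
  unfolding fixed_def \<beta>_def by simp

lemma ginv_in_stab:
  assumes "g \<in> stab G one \<alpha> (Mor G) B"
  shows "ginv G g \<in> stab G one \<alpha> (Mor G) B"
proof -
  have g: "g \<in> Mor G" "\<And>t. t \<in> B \<Longrightarrow> \<beta> g t = t * one g"
    using assms unfolding mem_stab_iff by auto
  have "\<beta> (ginv G g) (one g) = one (ginv G g)"
    using beta_ginv_beta[of g 1] g(1) by simp
  then have "\<beta> (ginv G g) t = t * one (ginv G g)" if "t \<in> B" for t
    using beta_ginv_beta[of g t] beta_mult[of "ginv G g" t "one g"] g that by simp
  then show ?thesis
    using g(1) unfolding mem_stab_iff by simp
qed

subsection \<open>Global morphisms\<close>

(* \<alpha>_g is then an isomorphism from all of S_{s(g)} onto all of S_{t(g)}. *)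
definition global :: "'g \<Rightarrow> bool" where
  "global g \<longleftrightarrow> g \<in> Mor G \<and> one (ginv G g) = one (src G g) \<and> one g = one (tgt G g)"

lemma beta_cmp_global_right:
  assumes "global m" "l \<in> Mor G" "src G l = tgt G m"
  shows "\<beta> (cmp G l m) t = \<beta> l (\<beta> m t)"
  using beta_cmp[of l m t] assms unfolding global_def by simp

lemma one_ginv_cmp_global_left:
  assumes "global l" "m \<in> Mor G" "src G l = tgt G m"
  shows "one (ginv G (cmp G l m)) = one (ginv G m)"
proof -
  have l: "l \<in> Mor G" "one (ginv G l) = one (tgt G m)" "one l = one (tgt G l)"
    using assms unfolding global_def by auto
  have "one (ginv G m) * one (ginv G (cmp G l m)) = one (ginv G m)"
    using one_ginv_cmp[of l m] l assms by simp
  moreover have "one (ginv G (cmp G l m)) * one (ginv G m) = one (ginv G (cmp G l m))"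
    using one_ginv_cmp[of "ginv G l" "cmp G l m"] l assms by simp
  ultimately show ?thesis
    by (simp add: mult.commute)
qed

lemma beta_cmp_global_left:
  assumes "global l" "m \<in> Mor G" "src G l = tgt G m"
  shows "\<beta> (cmp G l m) t = \<beta> l (\<beta> m t)"
proof -
  have "l \<in> Mor G"
    using assms(1) unfolding global_def by simp
  then show ?thesis
    using beta_cmp[of l m t] beta_restrict(1)[of "cmp G l m" t] one_ginv_cmp_global_left[OF assms] assms
    by simp
qed

lemma global_obj: "x \<in> Ob \<Longrightarrow> global x"
  unfolding global_def by simp

lemma global_ginv: "global g \<Longrightarrow> global (ginv G g)"
  unfolding global_def by simp

lemma global_cmp:
  assumes "global l" "global m" "src G l = tgt G m"
  shows "global (cmp G l m)"
proof -
  have "one (cmp G l m) = \<beta> l (\<beta> m 1)"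
    using beta_cmp_global_right[of m l 1] assms unfolding global_def by simp
  then have "one (cmp G l m) = one (tgt G l)"
    using assms unfolding global_def by simp
  then show ?thesis
    using one_ginv_cmp_global_left[of l m] assms unfolding global_def by simp
qed

lemma beta_conj_global:
  assumes "global \<kappa>" "global \<kappa>'" "k \<in> Mor G" "src G k = tgt G \<kappa>" "tgt G k = tgt G \<kappa>'"
  shows "\<beta> \<kappa>' (\<beta> (cmp G (cmp G (ginv G \<kappa>') k) \<kappa>) a) = \<beta> k (\<beta> \<kappa> a)"
proof -
  have \<kappa>: "\<kappa> \<in> Mor G" "\<kappa>' \<in> Mor G" "one \<kappa>' = one (tgt G k)"
    using assms unfolding global_def by auto
  have "\<beta> (cmp G (cmp G (ginv G \<kappa>') k) \<kappa>) a = \<beta> (ginv G \<kappa>') (\<beta> k (\<beta> \<kappa> a))"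
    using beta_cmp_global_right[of \<kappa> "cmp G (ginv G \<kappa>') k"] beta_cmp_global_left[of "ginv G \<kappa>'" k]
      global_ginv \<kappa> assms by simp
  then show ?thesis
    using \<kappa> assms(3) by simp
qed

lemma group_type_global_hom:
  assumes group_type: "group_type G one K" and sub: "subgroupoid G K" and "hom G K u v \<noteq> {}"
  shows "\<exists>k\<in>hom G K u v. global k"
proof -
  note K = subgroupoidD[OF sub]
  obtain g where g: "g \<in> K" "src G g = u" "tgt G g = v"
    using assms(3) by (metis all_not_in_conv mem_hom)
  have gM: "g \<in> Mor G"
    using g K(1) by blast
  have u: "u \<in> objs G K" "u \<in> hom G K u u"
    using g K(2) gM unfolding objs_def by (auto intro: image_eqI[of _ _ g])
  have "v \<in> objs G K"
    using g K(4) gM unfolding objs_def by (auto intro: image_eqI[of _ _ "ginv G g"])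
  then have v: "v \<in> component_objs G K u"
    using assms(3) unfolding component_objs_def by blast
  have "u \<in> component_objs G K u"
    using u unfolding component_objs_def by blast
  obtain x \<tau> where \<tau>: "\<And>y. y \<in> component_objs G K u \<Longrightarrow> \<tau> y \<in> hom G K x y
      \<and> Sid (one (ginv G (\<tau> y))) = Sid (one x) \<and> Sid (one (\<tau> y)) = Sid (one y)"
    using group_type u(1) unfolding group_type_def Let_def by blast
  have \<tau>_global: "global (\<tau> y)" if y: "y \<in> component_objs G K u" for y
  proof -
    have "\<tau> y \<in> Mor G" "src G (\<tau> y) = x" "tgt G (\<tau> y) = y"
      using \<tau>[OF y] K(1) by auto
    then show ?thesis
      using \<tau>[OF y] Sid_idem_inj[of "one (ginv G (\<tau> y))" "one x"] Sid_idem_inj[of "one (\<tau> y)" "one y"]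
      unfolding global_def by (metis groupoid_simps(1,2,3) one_idem)
  qed
  let ?k = "cmp G (\<tau> v) (ginv G (\<tau> u))"
  have "\<tau> u \<in> hom G K x u" "\<tau> v \<in> hom G K x v"
    using \<tau> v \<open>u \<in> component_objs G K u\<close> by blast+
  then have \<tau>_uv: "\<tau> u \<in> K" "\<tau> u \<in> Mor G" "src G (\<tau> u) = x" "tgt G (\<tau> u) = u"
      "\<tau> v \<in> K" "\<tau> v \<in> Mor G" "src G (\<tau> v) = x" "tgt G (\<tau> v) = v"
    using K(1) by auto
  then have "?k \<in> hom G K u v"
    using K by simp
  moreover have "global ?k"
    using global_cmp global_ginv \<tau>_global v \<open>u \<in> component_objs G K u\<close> \<tau>_uv by simp
  ultimately show ?thesis
    by blast
qed

lemma nz_idem_beta_global: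
  assumes "global m" "nz_idem e" "e * one (src G m) = e"
  shows "nz_idem (\<beta> m e)"
proof -
  have m: "m \<in> Mor G" "one (ginv G m) = one (src G m)"
    using assms(1) unfolding global_def by auto
  have "\<beta> m e \<noteq> 0"
  proof
    assume "\<beta> m e = 0"
    then have "e * one (ginv G m) = 0"
      using beta_ginv_beta[of m e] m by simp
    then show False
      using assms(2,3) m unfolding nz_idem_def by simp
  qed
  then show ?thesis
    using assms(2) beta_mult[OF m(1), of e e] unfolding nz_idem_def by simp
qed

end

section \<open>The decomposition of S into the ideals S_y\<close>

locale direct_sum_action = partial_action G one \<alpha>
  for G :: "'g groupoid" and one :: "'g \<Rightarrow> 'r::comm_ring_1" and \<alpha> :: "'g \<Rightarrow> 'r \<Rightarrow> 'r" +
  assumes finite_Mor: "finite (Mor G)" and direct_sum: "internal_direct_sum G one"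
begin

lemma finite_Ob: "finite Ob"
  using finite_Mor unfolding objs_def by simp

lemma one_obj_orthogonal:
  assumes "x \<in> Ob" "y \<in> Ob" "x \<noteq> y"
  shows "one x * one y = 0"
proof -
  let ?p = "one x * one y"
  define c where "c v = (if v = x then ?p else 0) + (if v = y then - ?p else 0)" for v
  have "c v \<in> Sid (one v)" if "v \<in> Ob" for v
    using that assms by (simp add: c_def algebra_simps mult.left_commute[of "one y"])
  moreover have "(\<Sum>v\<in>Ob. c v) = 0"
    unfolding c_def sum.distrib using assms finite_Ob by simp
  ultimately have "c x = 0"
    using direct_sum assms(1) unfolding internal_direct_sum_def by blast
  then show ?thesis
    using assms(3) unfolding c_def by simp
qed

lemma sum_mult_one_obj:
  assumes "C \<subseteq> Ob" "\<And>v. v \<in> C \<Longrightarrow> f v * one v = f v" "w \<in> Ob"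
  shows "(\<Sum>v\<in>C. f v) * one w = (if w \<in> C then f w else 0)"
proof -
  have "(\<Sum>v\<in>C. f v) * one w = (\<Sum>v\<in>C. if v = w then f w else 0)"
    unfolding sum_distrib_right
  proof (rule sum.cong)
    fix v assume v: "v \<in> C"
    then have "f v * one w = f v * (one v * one w)"
      using assms(2) by (metis mult.assoc)
    then show "f v * one w = (if v = w then f w else 0)"
      using one_obj_orthogonal[of v w] assms v by auto
  qed simp
  also have "\<dots> = (if w \<in> C then f w else 0)"
    using finite_subset[OF assms(1) finite_Ob] by simp
  finally show ?thesis .
qed

lemma sum_one_mult_one_obj:
  assumes "C \<subseteq> Ob" "w \<in> Ob"
  shows "(\<Sum>v\<in>C. one v) * one w = (if w \<in> C then one w else 0)"
proof -
  have "one v * one v = one v" if "v \<in> C" for v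
    using that assms(1) by auto
  then show ?thesis
    using sum_mult_one_obj[of C one w] assms by simp
qed

lemma beta_sum_one:
  assumes "C \<subseteq> Ob" "g \<in> Mor G"
  shows "\<beta> g (\<Sum>v\<in>C. one v) = (if src G g \<in> C then one g else 0)"
proof -
  have "\<beta> g ((\<Sum>v\<in>C. one v) * one (src G g)) = \<beta> g (if src G g \<in> C then one (src G g) else 0)"
    using sum_one_mult_one_obj assms by simp
  then show ?thesis
    using assms(2) by (simp split: if_splits)
qed

lemma sum_one_mult_one:
  assumes "C \<subseteq> Ob" "g \<in> Mor G"
  shows "(\<Sum>v\<in>C. one v) * one g = (if tgt G g \<in> C then one g else 0)"
proof -
  have "(\<Sum>v\<in>C. one v) * one g = (\<Sum>v\<in>C. one v) * one (tgt G g) * one g"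
    using assms(2) by (metis mult.assoc mult.commute one_mult_one_tgt)
  then show ?thesis
    using sum_one_mult_one_obj[of C "tgt G g"] assms by (simp add: mult.commute)
qed

end

section \<open>Invariants of a wide subgroupoid\<close>

locale wide_subgroupoid_action = direct_sum_action G one \<alpha>
  for G :: "'g groupoid" and one :: "'g \<Rightarrow> 'r::comm_ring_1" and \<alpha> :: "'g \<Rightarrow> 'r \<Rightarrow> 'r" +
  fixes H :: "'g set"
  assumes H_wSub: "H \<in> wSub G one"
begin

abbreviation T :: "'r set" where
  "T \<equiv> fixed G one \<alpha> H UNIV"

lemma H_subgroupoid: "subgroupoid G H"
  and H_group_type: "group_type G one H"
  and Ob_subset_H: "Ob \<subseteq> H"
  using H_wSub unfolding wSub_def wide_def by auto

lemmas H_closed = subgroupoidD[OF H_subgroupoid]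

lemma H_Mor [simp]: "k \<in> H \<Longrightarrow> k \<in> Mor G"
  using H_closed(1) by blast

lemma objs_H: "objs G H = Ob"
proof
  show "objs G H \<subseteq> Ob"
    unfolding objs_def by auto
  show "Ob \<subseteq> objs G H"
    using Ob_subset_H unfolding objs_def[of G H] by (metis image_eqI obj_simps(2) subsetD subsetI)
qed

lemma mem_T_iff: "t \<in> T \<longleftrightarrow> (\<forall>k\<in>H. \<beta> k t = t * one k)"
  unfolding mem_fixed_iff by simp

lemma one_in_T: "1 \<in> T"
  unfolding mem_T_iff by simp

lemma beta_cmp_global_T:
  assumes "t \<in> T" "k \<in> H" "global k" "h \<in> Mor G" "src G h = tgt G k"
  shows "\<beta> (cmp G h k) t = \<beta> h t"
proof -
  have "\<beta> k t = t * one (tgt G k)"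
    using assms(1-3) unfolding mem_T_iff global_def by simp
  then show ?thesis
    using beta_cmp_global_right[of k h t] assms by simp
qed

lemma one_cmp_global_T:
  assumes "k \<in> H" "global k" "h \<in> Mor G" "src G h = tgt G k"
  shows "one (cmp G h k) = one h"
  using beta_cmp_global_T[OF one_in_T assms] assms by simp

lemma stab_cmp_global_right_iff:
  assumes "k \<in> H" "global k" "l \<in> Mor G" "src G l = tgt G k"
  shows "cmp G l k \<in> stab G one \<alpha> (Mor G) T \<longleftrightarrow> l \<in> stab G one \<alpha> (Mor G) T"
  using beta_cmp_global_T[OF _ assms] one_cmp_global_T[OF assms] assms unfolding mem_stab_iff by simp

lemma stab_cmp_global_left_iff:
  assumes "k \<in> H" "global k" "l \<in> Mor G" "src G k = tgt G l"
  shows "cmp G k l \<in> stab G one \<alpha> (Mor G) T \<longleftrightarrow> l \<in> stab G one \<alpha> (Mor G) T"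
proof -
  have "cmp G k l \<in> stab G one \<alpha> (Mor G) T \<longleftrightarrow> cmp G (ginv G l) (ginv G k) \<in> stab G one \<alpha> (Mor G) T"
    using ginv_in_stab[of "cmp G k l"] ginv_in_stab[of "cmp G (ginv G l) (ginv G k)"] ginv_cmp assms
    by auto
  also have "\<dots> \<longleftrightarrow> ginv G l \<in> stab G one \<alpha> (Mor G) T"
    using stab_cmp_global_right_iff[of "ginv G k" "ginv G l"] global_ginv H_closed(4) assms by simp
  also have "\<dots> \<longleftrightarrow> l \<in> stab G one \<alpha> (Mor G) T"
    using ginv_in_stab[of l] ginv_in_stab[of "ginv G l"] assms by auto
  finally show ?thesis .
qed

lemma stab_restrict_obj_iff:
  assumes "l \<in> hom G (Mor G) y y"
  shows "l \<in> stab G one \<alpha> (hom G (Mor G) y y) (restrict_obj one T y) \<longleftrightarrow> l \<in> stab G one \<alpha> (Mor G) T"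
proof -
  have "t * one y * one l = t * one l" for t
    using assms one_mult_one_tgt[of l] by (metis mult.assoc mult.commute mem_hom)
  then show ?thesis
    using assms unfolding mem_stab_iff restrict_obj_def by auto
qed

lemma hom_H_sym: "hom G H u v \<noteq> {} \<Longrightarrow> hom G H v u \<noteq> {}"
  using H_closed(4) by fastforce

lemma mem_component_iff: "y \<in> component_objs G H x \<longleftrightarrow> y \<in> Ob \<and> hom G H x y \<noteq> {}"
  unfolding component_objs_def objs_H by simp

lemma component_self: "x \<in> Ob \<Longrightarrow> x \<in> component_objs G H x"
  unfolding mem_component_iff using Ob_subset_H by fastforce

lemma component_subset_Ob: "component_objs G H x \<subseteq> Ob"
  using mem_component_iff by blast

lemma src_in_component_iff:
  assumes "k \<in> H"
  shows "src G k \<in> component_objs G H x \<longleftrightarrow> tgt G k \<in> component_objs G H x"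
proof
  assume "src G k \<in> component_objs G H x"
  then obtain f where "f \<in> H" "src G f = x" "tgt G f = src G k"
    unfolding mem_component_iff by auto
  then have "cmp G k f \<in> hom G H x (tgt G k)"
    using H_closed(5) assms by simp
  then show "tgt G k \<in> component_objs G H x"
    unfolding mem_component_iff using assms by auto
next
  assume "tgt G k \<in> component_objs G H x"
  then obtain f where "f \<in> H" "src G f = x" "tgt G f = tgt G k"
    unfolding mem_component_iff by auto
  then have "cmp G (ginv G k) f \<in> hom G H x (src G k)"
    using H_closed(4,5) assms by simp
  then show "src G k \<in> component_objs G H x"
    unfolding mem_component_iff using assms by auto
qed

lemma component_indicator_in_T: "(\<Sum>v\<in>component_objs G H x. one v) \<in> T"
  unfolding mem_T_iff
  using beta_sum_one[OF component_subset_Ob] sum_one_mult_one[OF component_subset_Ob]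
    src_in_component_iff by simp

lemma beta_transport_fixed:
  assumes "\<kappa> \<in> hom G H y v" "global \<kappa>" "\<kappa>' \<in> hom G H y v'" "global \<kappa>'" "k \<in> hom G H v v'"
    and "b \<in> fixed G one \<alpha> (hom G H y y) B"
  shows "\<beta> k (\<beta> \<kappa> b) = \<beta> \<kappa>' b * one k"
proof -
  let ?l = "cmp G (cmp G (ginv G \<kappa>') k) \<kappa>"
  have conj: "\<beta> \<kappa>' (\<beta> ?l a) = \<beta> k (\<beta> \<kappa> a)" for a
    using beta_conj_global[of \<kappa> \<kappa>' k] assms by simp
  have "?l \<in> hom G H y y"
    using H_closed(4,5) assms by simp
  then have "\<beta> k (\<beta> \<kappa> b) = \<beta> \<kappa>' (b * one ?l)"
    using conj[of b] assms(6) unfolding mem_fixed_iff by simp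
  also have "\<dots> = \<beta> \<kappa>' b * \<beta> k (\<beta> \<kappa> 1)"
    using beta_mult conj[of 1] assms by simp
  also have "\<beta> k (\<beta> \<kappa> 1) = one k"
    using assms unfolding global_def by simp
  finally show ?thesis .
qed

lemma transport_sum_mult_one:
  assumes \<kappa>: "\<And>v. v \<in> component_objs G H y \<Longrightarrow> \<kappa> v \<in> hom G H y v"
    and "w \<in> Ob"
  shows "(\<Sum>v\<in>component_objs G H y. \<beta> (\<kappa> v) b) * one w
    = (if w \<in> component_objs G H y then \<beta> (\<kappa> w) b else 0)"
proof -
  have "\<beta> (\<kappa> v) b * one v = \<beta> (\<kappa> v) b" if "v \<in> component_objs G H y" for v
    using \<kappa>[OF that] beta_in_tgt[of "\<kappa> v" b] by simp
  then show ?thesis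
    using sum_mult_one_obj[of _ "\<lambda>v. \<beta> (\<kappa> v) b" w] component_subset_Ob assms(2) by simp
qed

lemma transport_sum_in_T:
  assumes \<kappa>: "\<And>v. v \<in> component_objs G H y \<Longrightarrow> \<kappa> v \<in> hom G H y v \<and> global (\<kappa> v)"
    and b: "b \<in> fixed G one \<alpha> (hom G H y y) B"
  shows "(\<Sum>v\<in>component_objs G H y. \<beta> (\<kappa> v) b) \<in> T"
  unfolding mem_T_iff
proof
  let ?C = "component_objs G H y" and ?t = "\<Sum>v\<in>component_objs G H y. \<beta> (\<kappa> v) b"
  fix k assume k: "k \<in> H"
  have proj: "?t * one w = (if w \<in> ?C then \<beta> (\<kappa> w) b else 0)" if "w \<in> Ob" for w
    using transport_sum_mult_one \<kappa> that by blast
  have split: "\<beta> k ?t = \<beta> k (?t * one (src G k))" "?t * one k = ?t * one (tgt G k) * one k"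
    using k by (simp_all add: mult.assoc)
  show "\<beta> k ?t = ?t * one k"
  proof (cases "src G k \<in> ?C")
    case True
    then have "tgt G k \<in> ?C"
      using src_in_component_iff[OF k] by simp
    have "\<beta> k ?t = \<beta> k (\<beta> (\<kappa> (src G k)) b)"
      using split proj[of "src G k"] True k by simp
    also have "\<dots> = \<beta> (\<kappa> (tgt G k)) b * one k"
      using beta_transport_fixed[OF _ _ _ _ _ b] \<kappa> True \<open>tgt G k \<in> ?C\<close> k by simp
    also have "\<dots> = ?t * one k"
      using split proj[of "tgt G k"] \<open>tgt G k \<in> ?C\<close> k by simp
    finally show ?thesis .
  next
    case False
    then have "tgt G k \<notin> ?C"
      using src_in_component_iff[OF k] by simp
    then show ?thesis
      using split proj[of "src G k"] proj[of "tgt G k"] False k by simp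
  qed
qed

lemma fixed_extends_to_T:
  assumes y: "y \<in> Ob" and b: "b \<in> fixed G one \<alpha> (hom G H y y) (Sid (one y))"
  shows "\<exists>t\<in>T. t * one y = b"
proof -
  let ?C = "component_objs G H y"
  have "\<exists>k\<in>hom G H y v. global k" if "v \<in> ?C" for v
    using group_type_global_hom[OF H_group_type H_subgroupoid] that unfolding mem_component_iff by blast
  then obtain \<kappa> where \<kappa>: "\<And>v. v \<in> ?C \<Longrightarrow> \<kappa> v \<in> hom G H y v \<and> global (\<kappa> v)"
    by metis
  have "y \<in> ?C" "\<kappa> y \<in> hom G H y y" "one (\<kappa> y) = one y"
    using \<kappa> component_self[OF y] unfolding global_def by auto
  then have "(\<Sum>v\<in>?C. \<beta> (\<kappa> v) b) * one y = b"
    using transport_sum_mult_one[of y \<kappa> y b] \<kappa> b y unfolding mem_fixed_iff by simp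
  then show ?thesis
    using transport_sum_in_T[OF \<kappa> b] by blast
qed

lemma restrict_obj_T:
  assumes "y \<in> Ob"
  shows "restrict_obj one T y = fixed G one \<alpha> (hom G H y y) (Sid (one y))"
proof
  show "restrict_obj one T y \<subseteq> fixed G one \<alpha> (hom G H y y) (Sid (one y))"
  proof
    fix b assume "b \<in> restrict_obj one T y"
    then obtain t where t: "t \<in> T" "b = t * one y"
      unfolding restrict_obj_def by blast
    have "\<beta> k b = b * one k" if "k \<in> hom G H y y" for k
      using t that unfolding mem_T_iff by (simp add: mult.assoc)
    then show "b \<in> fixed G one \<alpha> (hom G H y y) (Sid (one y))"
      using t assms unfolding mem_fixed_iff by simp
  qed
  show "fixed G one \<alpha> (hom G H y y) (Sid (one y)) \<subseteq> restrict_obj one T y"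
    using fixed_extends_to_T[OF assms] unfolding restrict_obj_def by fastforce
qed

subsection \<open>Separating morphisms by invariants\<close>

definition T_separates :: "'g \<Rightarrow> 'g \<Rightarrow> bool" where
  "T_separates g h \<longleftrightarrow>
     (\<forall>e. nz_idem e \<and> e \<in> Sid (one g) \<union> Sid (one h) \<longrightarrow> (\<exists>t\<in>T. \<beta> g t * e \<noteq> \<beta> h t * e))"

lemma strong_at_restrict_obj_iff:
  assumes "y \<in> Ob"
  shows "strong_at G one \<alpha> (restrict_obj one T y) y z \<longleftrightarrow>
    (\<forall>g\<in>hom G (Mor G) y z. \<forall>h\<in>hom G (Mor G) y z.
       cmp G (ginv G g) h \<notin> stab G one \<alpha> (Mor G) T \<longrightarrow> T_separates g h)"
proof -
  have "cmp G (ginv G g) h \<in> stab G one \<alpha> (hom G (Mor G) y y) (restrict_obj one T y)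
      \<longleftrightarrow> cmp G (ginv G g) h \<in> stab G one \<alpha> (Mor G) T"
    if "g \<in> hom G (Mor G) y z" "h \<in> hom G (Mor G) y z" for g h
    using stab_restrict_obj_iff[of "cmp G (ginv G g) h" y] that by simp
  moreover have "(\<exists>b\<in>restrict_obj one T y. \<beta> g b * e \<noteq> \<beta> h b * e) \<longleftrightarrow> (\<exists>t\<in>T. \<beta> g t * e \<noteq> \<beta> h t * e)"
    if "g \<in> hom G (Mor G) y z" "h \<in> hom G (Mor G) y z" for g h e
    using that unfolding restrict_obj_def by auto
  ultimately show ?thesis
    unfolding strong_at_def T_separates_def \<beta>_def[symmetric] by auto
qed

lemma T_separates_cmp_global_right:
  assumes "k \<in> H" "global k" "g \<in> Mor G" "src G g = tgt G k"
    and "k' \<in> H" "global k'" "h \<in> Mor G" "src G h = tgt G k'"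
  shows "T_separates (cmp G g k) (cmp G h k') \<longleftrightarrow> T_separates g h"
  using beta_cmp_global_T one_cmp_global_T assms unfolding T_separates_def by simp

lemma T_separates_cmp_global_left:
  assumes "global m" "g \<in> Mor G" "h \<in> Mor G" "src G m = tgt G g" "src G m = tgt G h"
    and "T_separates (cmp G m g) (cmp G m h)"
  shows "T_separates g h"
  unfolding T_separates_def
proof (intro allI impI)
  fix e assume e: "nz_idem e \<and> e \<in> Sid (one g) \<union> Sid (one h)"
  have m: "m \<in> Mor G"
    using assms(1) unfolding global_def by auto
  have e_in: "e * one g = e \<or> e * one h = e"
    using e assms by auto
  then have "e * one (src G m) = e"
    using assms(2-5) by (metis mult_one_mult_one_tgt)
  then have "nz_idem (\<beta> m e)"
    using nz_idem_beta_global assms(1) e by blast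
  moreover have "\<beta> m e * one (cmp G m f) = \<beta> m e"
    if "e * one f = e" "f \<in> Mor G" "src G m = tgt G f" for f
    using beta_cmp_global_left[OF assms(1) that(2,3), of 1] beta_mult[OF m, of e "one f"] that m by simp
  then have "\<beta> m e \<in> Sid (one (cmp G m g)) \<union> Sid (one (cmp G m h))"
    using e_in assms m by auto
  ultimately obtain t where "t \<in> T" "\<beta> (cmp G m g) t * \<beta> m e \<noteq> \<beta> (cmp G m h) t * \<beta> m e"
    using assms(6) unfolding T_separates_def by blast
  then have "\<beta> m (\<beta> g t * e) \<noteq> \<beta> m (\<beta> h t * e)"
    using beta_cmp_global_left[OF assms(1)] beta_mult[OF m] assms by simp
  then show "\<exists>t\<in>T. \<beta> g t * e \<noteq> \<beta> h t * e"
    using \<open>t \<in> T\<close> by metis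
qed

lemma T_separates_disconnected:
  assumes "g \<in> Mor G" "h \<in> Mor G" "hom G H (src G g) (src G h) = {}"
  shows "T_separates g h"
  unfolding T_separates_def
proof (intro allI impI)
  fix e assume e: "nz_idem e \<and> e \<in> Sid (one g) \<union> Sid (one h)"
  let ?C = "\<lambda>x. \<Sum>v\<in>component_objs G H x. one v"
  have "src G h \<notin> component_objs G H (src G g)" "src G g \<notin> component_objs G H (src G h)"
    using assms hom_H_sym[of "src G h" "src G g"] unfolding mem_component_iff by auto
  then have C: "\<beta> g (?C (src G g)) = one g" "\<beta> h (?C (src G g)) = 0"
      "\<beta> g (?C (src G h)) = 0" "\<beta> h (?C (src G h)) = one h"
    using beta_sum_one[OF component_subset_Ob] component_self assms by simp_all
  have "e \<noteq> 0" "e * one g = e \<or> e * one h = e"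
    using e assms unfolding nz_idem_def by auto
  then have "\<beta> g (?C (src G g)) * e \<noteq> \<beta> h (?C (src G g)) * e
      \<or> \<beta> g (?C (src G h)) * e \<noteq> \<beta> h (?C (src G h)) * e"
    unfolding C by (auto simp: mult.commute)
  then show "\<exists>t\<in>T. \<beta> g t * e \<noteq> \<beta> h t * e"
    using component_indicator_in_T by blast
qed

lemma T_separates_same_target:
  assumes strong: "\<forall>y\<in>Ob. \<forall>z\<in>Ob. \<forall>g\<in>hom G (Mor G) y z. \<forall>h\<in>hom G (Mor G) y z.
      cmp G (ginv G g) h \<notin> stab G one \<alpha> (Mor G) T \<longrightarrow> T_separates g h"
    and gh: "g \<in> Mor G" "h \<in> Mor G" "tgt G g = tgt G h"
    and not_stab: "cmp G (ginv G g) h \<notin> stab G one \<alpha> (Mor G) T"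
  shows "T_separates g h"
proof (cases "hom G H (src G h) (src G g) = {}")
  case True
  then show ?thesis
    using T_separates_disconnected[OF gh(1,2)] hom_H_sym by blast
next
  case False
  then obtain k where k: "k \<in> hom G H (src G h) (src G g)" "global k"
    using group_type_global_hom[OF H_group_type H_subgroupoid] by blast
  let ?h = "cmp G h (ginv G k)"
  have k': "ginv G k \<in> H" "global (ginv G k)"
    using k H_closed(4) global_ginv by auto
  have "cmp G (ginv G g) ?h \<notin> stab G one \<alpha> (Mor G) T"
    using stab_cmp_global_right_iff[OF k', of "cmp G (ginv G g) h"] not_stab gh k by simp
  then have "T_separates g ?h"
    using strong[rule_format, of "src G g" "tgt G g" g ?h] gh k by simp
  moreover have "T_separates (cmp G g (src G g)) ?h \<longleftrightarrow> T_separates g h"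
    by (rule T_separates_cmp_global_right) (use Ob_subset_H global_obj gh k k' in auto)
  ultimately show ?thesis
    using gh by simp
qed

lemma T_separates_of_strong_at_representatives:
  assumes conn: "connected_groupoid G" and group_type: "group_type G one (Mor G)"
    and Y: "\<And>x. x \<in> Ob \<Longrightarrow> \<exists>y\<in>Y. y \<in> component_objs G H x"
    and strong: "\<And>y. y \<in> Y \<Longrightarrow> strong_at G one \<alpha> (restrict_obj one T y) y y"
    and g: "g \<in> hom G (Mor G) y z" and h: "h \<in> hom G (Mor G) y z"
    and not_stab: "cmp G (ginv G g) h \<notin> stab G one \<alpha> (Mor G) T"
  shows "T_separates g h"
proof -
  have yz: "y \<in> Ob" "z \<in> Ob"
    using g by auto
  obtain y' where y': "y' \<in> Y" "y' \<in> component_objs G H y"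
    using Y[OF yz(1)] by blast
  then have "y' \<in> Ob" "hom G H y' y \<noteq> {}"
    using hom_H_sym[of y y'] unfolding mem_component_iff by auto
  then obtain k where k: "k \<in> hom G H y' y" "global k"
    using group_type_global_hom[OF H_group_type H_subgroupoid] by blast
  have "hom G (Mor G) z y' \<noteq> {}"
    using conn yz \<open>y' \<in> Ob\<close> unfolding connected_groupoid_def by blast
  then obtain m where m: "m \<in> hom G (Mor G) z y'" "global m"
    using group_type_global_hom[OF group_type subgroupoid_Mor] by blast
  let ?g = "cmp G (cmp G m g) k" and ?h = "cmp G (cmp G m h) k"
  have k': "ginv G k \<in> H" "global (ginv G k)"
    using k H_closed(4) global_ginv by auto
  have "cmp G (ginv G ?g) ?h = cmp G (cmp G (ginv G k) (cmp G (ginv G (cmp G m g)) (cmp G m h))) k"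
    by (rule cmp_ginv_cmp_conj) (use g h k m in simp_all)
  also have "cmp G (ginv G (cmp G m g)) (cmp G m h) = cmp G (ginv G g) h"
    by (rule cmp_ginv_cmp_cancel) (use g h m in simp_all)
  finally have conj: "cmp G (ginv G ?g) ?h = cmp G (cmp G (ginv G k) (cmp G (ginv G g) h)) k" .
  have "cmp G (cmp G (ginv G k) (cmp G (ginv G g) h)) k \<in> stab G one \<alpha> (Mor G) T
      \<longleftrightarrow> cmp G (ginv G k) (cmp G (ginv G g) h) \<in> stab G one \<alpha> (Mor G) T"
    by (rule stab_cmp_global_right_iff) (use g h k in simp_all)
  also have "\<dots> \<longleftrightarrow> cmp G (ginv G g) h \<in> stab G one \<alpha> (Mor G) T"
    by (rule stab_cmp_global_left_iff) (use g h k k' in simp_all)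
  finally have "cmp G (ginv G ?g) ?h \<notin> stab G one \<alpha> (Mor G) T"
    unfolding conj using not_stab by blast
  moreover have "?g \<in> hom G (Mor G) y' y'" "?h \<in> hom G (Mor G) y' y'"
    using g h k m by simp_all
  ultimately have "T_separates ?g ?h"
    using strong[OF y'(1)] strong_at_restrict_obj_iff[OF \<open>y' \<in> Ob\<close>] by blast
  moreover have "T_separates ?g ?h \<longleftrightarrow> T_separates (cmp G m g) (cmp G m h)"
    by (rule T_separates_cmp_global_right) (use g h k m in simp_all)
  ultimately show ?thesis
    using T_separates_cmp_global_left[OF m(2)] g h m by simp
qed

end

theorem proposition5p4:
  fixes G :: "'g groupoid"
    and one :: "'g \<Rightarrow> 'r::comm_ring_1"
    and \<alpha> :: "'g \<Rightarrow> 'r \<Rightarrow> 'r"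
    and H :: "'g set"
    and Y :: "'g set"
  assumes "is_groupoid G"
    and "finite (Mor G)"
    and "connected_groupoid G"
    and "unital_partial_action G one \<alpha>"
    and "internal_direct_sum G one"
    and "\<forall>g\<in>Mor G. one g \<noteq> 0"
    and "group_type G one (Mor G)"
    and "H \<in> wSub G one"
    and "Y \<subseteq> objs G H"
    and "\<forall>x\<in>objs G H. \<exists>!y. y \<in> Y \<and> y \<in> component_objs G H x"
  defines "T \<equiv> fixed G one \<alpha> H UNIV"
  shows "(alpha_strong G one \<alpha> T
          \<longleftrightarrow> (\<forall>g\<in>Mor G. \<forall>h\<in>Mor G. tgt G g = tgt G h
                 \<and> cmp G (ginv G g) h \<notin> stab G one \<alpha> (Mor G) T \<longrightarrow>
                 (\<forall>e. nz_idem e \<and> e \<in> Sid (one g) \<union> Sid (one h) \<longrightarrow>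
                    (\<exists>t\<in>T. \<alpha> g (t * one (ginv G g)) * e \<noteq> \<alpha> h (t * one (ginv G h)) * e))))
       \<and> (alpha_strong G one \<alpha> T
          \<longleftrightarrow> (\<forall>y\<in>Y. strong_at G one \<alpha> (fixed G one \<alpha> (hom G H y y) (Sid (one y))) y y))"
proof -
  interpret wide_subgroupoid_action G one \<alpha> H
    by unfold_locales (use assms in auto)
  have Y: "\<And>y. y \<in> Y \<Longrightarrow> y \<in> Ob" "\<And>x. x \<in> Ob \<Longrightarrow> \<exists>y\<in>Y. y \<in> component_objs G H x"
    using assms(9,10) objs_H by auto
  have i: "alpha_strong G one \<alpha> T \<longleftrightarrow> (\<forall>y\<in>Ob. \<forall>z\<in>Ob. \<forall>g\<in>hom G (Mor G) y z. \<forall>h\<in>hom G (Mor G) y z.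
      cmp G (ginv G g) h \<notin> stab G one \<alpha> (Mor G) T \<longrightarrow> T_separates g h)" (is "_ \<longleftrightarrow> ?i")
    unfolding alpha_strong_def T_def using strong_at_restrict_obj_iff by simp
  have ii: "(\<forall>g\<in>Mor G. \<forall>h\<in>Mor G. tgt G g = tgt G h \<and> cmp G (ginv G g) h \<notin> stab G one \<alpha> (Mor G) T \<longrightarrow>
      (\<forall>e. nz_idem e \<and> e \<in> Sid (one g) \<union> Sid (one h) \<longrightarrow>
        (\<exists>t\<in>T. \<alpha> g (t * one (ginv G g)) * e \<noteq> \<alpha> h (t * one (ginv G h)) * e)))
    \<longleftrightarrow> (\<forall>g\<in>Mor G. \<forall>h\<in>Mor G. tgt G g = tgt G h \<and> cmp G (ginv G g) h \<notin> stab G one \<alpha> (Mor G) T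
      \<longrightarrow> T_separates g h)" (is "_ \<longleftrightarrow> ?ii")
    unfolding T_separates_def \<beta>_def T_def ..
  have iii: "(\<forall>y\<in>Y. strong_at G one \<alpha> (fixed G one \<alpha> (hom G H y y) (Sid (one y))) y y)
      \<longleftrightarrow> (\<forall>y\<in>Y. strong_at G one \<alpha> (restrict_obj one T y) y y)" (is "_ \<longleftrightarrow> ?iii")
    unfolding T_def using restrict_obj_T Y(1) by simp
  have "?i \<longleftrightarrow> ?ii"
    using T_separates_same_target unfolding T_def by fastforce
  moreover have "?i \<longleftrightarrow> ?iii"
    using T_separates_of_strong_at_representatives[OF assms(3,7) Y(2)] strong_at_restrict_obj_iff Y(1)
    unfolding T_def by fastforce
  ultimately show ?thesis
    unfolding i ii iii by blast
qed

end
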